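(* Let $\mathbb{L}$ be a complete orthomodular lattice and let $f:\mathcal{D}(\mathbb{L})\to\mathbb{R}$ be an abstract observable function. Then there is a unique spectral family $E:\mathbb{R}\to\mathbb{L}$ such that $f(\mathcal{J})=\inf\{\lambda\in\mathbb{R} : E_\lambda\in\mathcal{J}\}$ for all $\mathcal{J}\in\mathcal{D}(\mathbb{L})$.
   Context: A complete orthomodular lattice is a complete lattice $\mathbb{L}$ with zero $0$ and unit $1$ and an orthocomplementation $a\mapsto a^\perp$ (involutive, order-reversing, $a\wedge a^\perp=0$, $a\vee a^\perp=1$) such that $a\le b$ implies $b=a\vee(b\wedge a^\perp)$. A dual ideal of $\mathbb{L}$ is a nonempty $\mathcal{J}\subseteq\mathbb{L}$ with $0\notin\mathcal{J}$, $a,b\in\mathcal{J}\Rightarrow a\wedge b\in\mathcal{J}$, and $a\in\mathcal{J},a\le b\Rightarrow b\in\mathcal{J}$; $\mathcal{D}(\mathbb{L})$ is the set of dual ideals, topologized by the basis $\mathcal{D}_a(\mathbb{L}):=\{\mathcal{J}: a\in\mathcal{J}\}$. An abstract observable function is $f:\mathcal{D}(\mathbb{L})\to\mathbb{R}$ that is upper semicontinuous (for all $\mathcal{J}_0$, $\varepsilon>0$ there is $a\in\mathcal{J}_0$ with $f(\mathcal{J})<f(\mathcal{J}_0)+\varepsilon$ for all $\mathcal{J}\in\mathcal{D}_a(\mathbb{L})$) and satisfies $f(\bigcap_{j}\mathcal{J}_j)=\sup_j f(\mathcal{J}_j)$ for every nonempty family of dual ideals. A spectral family in $\mathbb{L}$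 is a map $E:\mathbb{R}\to\mathbb{L}$ with $E_\lambda\le E_\mu$ for $\lambda\le\mu$, $E_\lambda=\bigwedge_{\mu>\lambda}E_\mu$ for all $\lambda$, $\bigwedge_\lambda E_\lambda=0$ and $\bigvee_\lambda E_\lambda=1$. *)

theory Defs
  imports Main "HOL.Real"
begin

text \<open>A complete orthomodular lattice: the carrier is a type of class complete_lattice
  (zero = bot, unit = top) together with an orthocomplementation orth.\<close>

definition orthomodular :: "('a::complete_lattice \<Rightarrow> 'a) \<Rightarrow> bool" where
  "orthomodular orth \<longleftrightarrow>
     (\<forall>a. orth (orth a) = a) \<and>
     (\<forall>a b. a \<le> b \<longrightarrow> orth b \<le> orth a) \<and>
     (\<forall>a. inf a (orth a) = bot) \<and>
     (\<forall>a. sup a (orth a) = top) \<and>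
     (\<forall>a b. a \<le> b \<longrightarrow> b = sup a (inf b (orth a)))"

definition dual_ideal :: "'a::complete_lattice set \<Rightarrow> bool" where
  "dual_ideal J \<longleftrightarrow>
     J \<noteq> {} \<and> bot \<notin> J \<and>
     (\<forall>a\<in>J. \<forall>b\<in>J. inf a b \<in> J) \<and>
     (\<forall>a\<in>J. \<forall>b. a \<le> b \<longrightarrow> b \<in> J)"

definition abstract_observable_function :: "('a::complete_lattice set \<Rightarrow> real) \<Rightarrow> bool" where
  "abstract_observable_function f \<longleftrightarrow>
     \<comment> \<open>upper semicontinuity w.r.t. the topology with basis D_a = {J. a \<in> J}\<close>
     (\<forall>J0. dual_ideal J0 \<longrightarrow> (\<forall>\<epsilon>>0. \<exists>a\<in>J0.
         \<forall>J. dual_ideal J \<and> a \<in> J \<longrightarrow> f J < f J0 + \<epsilon>)) \<and>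
     \<comment> \<open>f of an intersection is the supremum (least upper bound) of the values\<close>
     (\<forall>F. F \<noteq> {} \<and> (\<forall>J\<in>F. dual_ideal J) \<longrightarrow>
         (\<forall>J\<in>F. f J \<le> f (\<Inter>F)) \<and>
         (\<forall>y. (\<forall>J\<in>F. f J \<le> y) \<longrightarrow> f (\<Inter>F) \<le> y))"

definition spectral_family :: "(real \<Rightarrow> 'a::complete_lattice) \<Rightarrow> bool" where
  "spectral_family E \<longleftrightarrow>
     (\<forall>l m. l \<le> m \<longrightarrow> E l \<le> E m) \<and>
     (\<forall>l. E l = Inf {E m | m. m > l}) \<and>
     Inf (range E) = bot \<and>
     Sup (range E) = top"

text \<open>x is the infimum (greatest lower bound) in the reals of the set S
  (in particular S is nonempty and bounded below).\<close>
definition is_real_inf :: "real \<Rightarrow> real set \<Rightarrow> bool" where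
  "is_real_inf x S \<longleftrightarrow> (\<forall>s\<in>S. x \<le> s) \<and> (\<forall>y. (\<forall>s\<in>S. y \<le> s) \<longrightarrow> y \<le> x)"

end

theory Submission
  imports Defs
begin

(* Let E l be the join of all a \<noteq> bot with f {a..} \<le> l.  The principal filters of these
   elements intersect to {E l..}, so the intersection axiom gives  a \<le> E l \<longleftrightarrow> f {a..} \<le> l
   for every a \<noteq> bot.  This Galois-type condition alone makes E a spectral family, and upper
   semicontinuity yields f J = inf {l. E l \<in> J}.  Conversely, by right continuity every
   spectral family representing f satisfies the same condition, which determines it. *)

lemma eq_if_same_nonbot_lower_bounds:
  fixes x y :: "'a::order_bot"
  assumes "\<And>c. c \<noteq> bot \<Longrightarrow> c \<le> x \<longleftrightarrow> c \<le> y"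
  shows "x = y"
proof (rule antisym)
  show "x \<le> y" using assms[of x] by (cases "x = bot") auto
  show "y \<le> x" using assms[of y] by (cases "y = bot") auto
qed

lemma dual_ideal_atLeast:
  fixes c :: "'a::complete_lattice"
  assumes "c \<noteq> bot"
  shows "dual_ideal {c..}"
  using assms by (auto simp: dual_ideal_def bot_unique)

lemma dual_ideal_nonbot:
  "dual_ideal J \<Longrightarrow> a \<in> J \<Longrightarrow> a \<noteq> bot"
  unfolding dual_ideal_def by auto

lemma dual_ideal_upward:
  "dual_ideal J \<Longrightarrow> a \<in> J \<Longrightarrow> a \<le> b \<Longrightarrow> b \<in> J"
  unfolding dual_ideal_def by auto

lemma dual_ideal_atLeast_subset:
  "dual_ideal J \<Longrightarrow> a \<in> J \<Longrightarrow> {a..} \<subseteq> J"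
  by (auto intro: dual_ideal_upward)

lemma abstract_observable_function_Inter_le:
  assumes "abstract_observable_function f" "F \<noteq> {}" "\<And>J. J \<in> F \<Longrightarrow> dual_ideal J"
    and "\<And>J. J \<in> F \<Longrightarrow> f J \<le> y"
  shows "f (\<Inter>F) \<le> y"
proof -
  have "\<forall>F. F \<noteq> {} \<and> (\<forall>J\<in>F. dual_ideal J) \<longrightarrow>
      (\<forall>y. (\<forall>J\<in>F. f J \<le> y) \<longrightarrow> f (\<Inter>F) \<le> y)"
    using assms(1) unfolding abstract_observable_function_def by simp
  with assms(2-4) show ?thesis by simp
qed

lemma abstract_observable_function_le_Inter:
  assumes "abstract_observable_function f" "\<And>J. J \<in> F \<Longrightarrow> dual_ideal J" "J \<in> F"
  shows "f J \<le> f (\<Inter>F)"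
proof -
  have "\<forall>F. F \<noteq> {} \<and> (\<forall>J\<in>F. dual_ideal J) \<longrightarrow> (\<forall>J\<in>F. f J \<le> f (\<Inter>F))"
    using assms(1) unfolding abstract_observable_function_def by simp
  with assms(2,3) show ?thesis by blast
qed

lemma abstract_observable_function_antimono:
  assumes "abstract_observable_function f" "dual_ideal J" "dual_ideal J'" "J \<subseteq> J'"
  shows "f J' \<le> f J"
proof -
  have "\<Inter>{J, J'} = J" using assms(4) by auto
  moreover have "f J' \<le> f (\<Inter>{J, J'})"
    using assms(2,3) by (intro abstract_observable_function_le_Inter[OF assms(1)]) auto
  ultimately show ?thesis by simp
qed

lemma abstract_observable_function_atLeast_mono:
  fixes a b :: "'a::complete_lattice"
  assumes "abstract_observable_function f" "a \<noteq> bot" "a \<le> b"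
  shows "f {a..} \<le> f {b..}"
proof (rule abstract_observable_function_antimono[OF assms(1)])
  show "dual_ideal {b..}" using assms(2,3) by (metis bot_unique dual_ideal_atLeast)
  show "dual_ideal {a..}" using assms(2) by (rule dual_ideal_atLeast)
  show "{b..} \<subseteq> {a..}" using assms(3) by auto
qed

lemma abstract_observable_function_usc_atLeast:
  assumes "abstract_observable_function f" "dual_ideal J" "e > 0"
  obtains a where "a \<in> J" "f {a..} < f J + e"
proof -
  obtain a where a: "a \<in> J" and near: "\<And>K. dual_ideal K \<Longrightarrow> a \<in> K \<Longrightarrow> f K < f J + e"
    using assms unfolding abstract_observable_function_def by meson
  have "f {a..} < f J + e"
    using near dual_ideal_atLeast[OF dual_ideal_nonbot[OF assms(2) a]] by simp
  with a show thesis by (rule that)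
qed

lemma spectral_familyI_galois:
  fixes E :: "real \<Rightarrow> 'a::complete_lattice" and g :: "'a \<Rightarrow> real"
  assumes galois: "\<And>a l. a \<noteq> bot \<Longrightarrow> a \<le> E l \<longleftrightarrow> g a \<le> l"
  shows "spectral_family E"
  unfolding spectral_family_def
proof (intro conjI allI impI)
  have mono: "E l \<le> E m" if "l \<le> m" for l m
  proof (cases "E l = bot")
    case False
    then have "g (E l) \<le> l" using galois by blast
    with that False show ?thesis using galois by (meson order_trans)
  qed simp
  then show "l \<le> m \<Longrightarrow> E l \<le> E m" for l m .
  show "E l = Inf {E m |m. m > l}" for l
  proof (rule antisym)
    show "E l \<le> Inf {E m |m. m > l}" by (rule Inf_greatest) (auto intro: mono)
    let ?b = "Inf {E m |m. m > l}"
    show "?b \<le> E l"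
    proof (cases "?b = bot")
      case False
      have "g ?b \<le> m" if "m > l" for m
      proof -
        have "?b \<le> E m" by (rule Inf_lower) (use that in blast)
        then show ?thesis using galois[OF False] by blast
      qed
      then have "g ?b \<le> l" by (rule dense_ge)
      then show ?thesis using galois[OF False] by simp
    qed simp
  qed
  show "Inf (range E) = bot"
  proof (rule ccontr)
    assume nonbot: "Inf (range E) \<noteq> bot"
    have "Inf (range E) \<le> E (g (Inf (range E)) - 1)" by (rule Inf_lower) simp
    then show False using galois[OF nonbot] by simp
  qed
  show "Sup (range E) = top"
  proof (cases "(top::'a) = bot")
    case False
    then have "top \<le> E (g top)" using galois by simp
    then show ?thesis using Sup_upper[OF rangeI, of E "g top"] by (simp add: top_unique)
  next
    case True
    then have "top \<le> Sup (range E)" by simp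
    then show ?thesis by (simp only: top_unique)
  qed
qed

text \<open>Right continuity makes the infimum of the representation attained.\<close>

lemma spectral_family_le_iff_is_real_inf:
  assumes "spectral_family E" "is_real_inf r {l. c \<le> E l}"
  shows "c \<le> E l \<longleftrightarrow> r \<le> l"
proof
  assume "c \<le> E l"
  then show "r \<le> l" using assms(2) unfolding is_real_inf_def by blast
next
  assume "r \<le> l"
  have mono: "E s \<le> E m" if "s \<le> m" for s m
    using assms(1) that unfolding spectral_family_def by blast
  have "c \<le> E m" if "m > l" for m
  proof (rule ccontr)
    assume "\<not> c \<le> E m"
    then have "m \<le> s" if "c \<le> E s" for s
      using that mono[of s m] by (meson linear order_trans)
    then have "m \<le> r" using assms(2) unfolding is_real_inf_def by blast
    with \<open>r \<le> l\<close> \<open>m > l\<close> show False by simp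
  qed
  then have "c \<le> Inf {E m |m. m > l}" by (auto intro: Inf_greatest)
  then show "c \<le> E l" using assms(1) unfolding spectral_family_def by metis
qed

definition observable_spectral_family :: "('a::complete_lattice set \<Rightarrow> real) \<Rightarrow> real \<Rightarrow> 'a" where
  "observable_spectral_family f l = Sup {a. a \<noteq> bot \<and> f {a..} \<le> l}"

lemma le_observable_spectral_family_iff:
  fixes a :: "'a::complete_lattice"
  assumes f: "abstract_observable_function f" and "a \<noteq> bot"
  shows "a \<le> observable_spectral_family f l \<longleftrightarrow> f {a..} \<le> l"
proof
  assume "f {a..} \<le> l"
  with \<open>a \<noteq> bot\<close> show "a \<le> observable_spectral_family f l"
    unfolding observable_spectral_family_def by (auto intro: Sup_upper)
next
  define S where "S = {a. a \<noteq> bot \<and> f {a..} \<le> l}"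
  assume "a \<le> observable_spectral_family f l"
  then have a_le: "a \<le> Sup S" by (simp add: observable_spectral_family_def S_def)
  then have "S \<noteq> {}" using \<open>a \<noteq> bot\<close> by (auto simp: bot_unique)
  have "f (\<Inter>((\<lambda>b. {b..}) ` S)) \<le> l"
    using \<open>S \<noteq> {}\<close> by (intro abstract_observable_function_Inter_le[OF f])
      (auto simp: S_def intro: dual_ideal_atLeast)
  moreover have "\<Inter>((\<lambda>b. {b..}) ` S) = {Sup S..}"
    by (auto simp: Sup_le_iff intro: order_trans[OF Sup_upper])
  ultimately have "f {Sup S..} \<le> l" by simp
  then show "f {a..} \<le> l"
    using abstract_observable_function_atLeast_mono[OF f \<open>a \<noteq> bot\<close> a_le] by simp
qed

lemma observable_spectral_family_represents:
  assumes f: "abstract_observable_function f" and J: "dual_ideal J"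
  shows "is_real_inf (f J) {l. observable_spectral_family f l \<in> J}"
  unfolding is_real_inf_def
proof (intro conjI ballI allI impI)
  let ?E = "observable_spectral_family f"
  fix s assume "s \<in> {l. ?E l \<in> J}"
  then have s: "?E s \<in> J" by simp
  note nonbot = dual_ideal_nonbot[OF J s]
  have "f J \<le> f {?E s..}"
    by (rule abstract_observable_function_antimono[OF f dual_ideal_atLeast[OF nonbot] J
          dual_ideal_atLeast_subset[OF J s]])
  also have "\<dots> \<le> s" using le_observable_spectral_family_iff[OF f nonbot, of s] by simp
  finally show "f J \<le> s" .
next
  let ?E = "observable_spectral_family f"
  fix y assume y: "\<forall>s\<in>{l. ?E l \<in> J}. y \<le> s"
  show "y \<le> f J"
  proof (rule ccontr)
    assume "\<not> y \<le> f J"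
    then obtain a where a: "a \<in> J" "f {a..} < y"
      using abstract_observable_function_usc_atLeast[OF f J, of "y - f J"] by force
    have "a \<le> ?E (f {a..})"
      using le_observable_spectral_family_iff[OF f dual_ideal_nonbot[OF J a(1)], of "f {a..}"]
      by simp
    then have "?E (f {a..}) \<in> J" using J a(1) dual_ideal_upward by blast
    with y a(2) show False by auto
  qed
qed

lemma spectral_family_representing_eq_observable_spectral_family:
  assumes f: "abstract_observable_function f" and E: "spectral_family E"
    and represents: "\<forall>J. dual_ideal J \<longrightarrow> is_real_inf (f J) {l. E l \<in> J}"
  shows "E = observable_spectral_family f"
proof
  fix l
  have "c \<le> E l \<longleftrightarrow> c \<le> observable_spectral_family f l" if "c \<noteq> bot" for c
  proof -
    have "is_real_inf (f {c..}) {l. E l \<in> {c..}}"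
      using represents dual_ideal_atLeast[OF that] by blast
    then have "is_real_inf (f {c..}) {l. c \<le> E l}" by simp
    then show ?thesis
      using spectral_family_le_iff_is_real_inf[OF E] le_observable_spectral_family_iff[OF f that]
      by blast
  qed
  then show "E l = observable_spectral_family f l" by (rule eq_if_same_nonbot_lower_bounds)
qed

theorem theorem2p25:
  fixes orth :: "'a::complete_lattice \<Rightarrow> 'a"
    and f :: "'a set \<Rightarrow> real"
  assumes "orthomodular orth"
    and "abstract_observable_function f"
  shows "\<exists>!E :: real \<Rightarrow> 'a. spectral_family E \<and>
           (\<forall>J. dual_ideal J \<longrightarrow> is_real_inf (f J) {l. E l \<in> J})"
proof (rule ex1I[of _ "observable_spectral_family f"])
  show "spectral_family (observable_spectral_family f) \<and>
      (\<forall>J. dual_ideal J \<longrightarrow> is_real_inf (f J) {l. observable_spectral_family f l \<in> J})"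
    using spectral_familyI_galois[OF le_observable_spectral_family_iff[OF assms(2)]]
      observable_spectral_family_represents[OF assms(2)] by simp
qed (use spectral_family_representing_eq_observable_spectral_family[OF assms(2)] in blast)

end
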